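(* Let $M,N,d$ be positive integers with $d>N$. For $i=1,\dots,M$ let $X_i\in\mathbb{R}^{N\times d}$ have full row rank $N$, let $w_i^*\in\mathbb{R}^d$, $z_i\in\mathbb{R}^N$, and $y_i = X_i w_i^* + z_i\in\mathbb{R}^N$. Consider Local-GD for linear regression: given $w_0^0\in\mathbb{R}^d$, for $k=0,1,2,\dots$ each node $i$ runs gradient descent $w\mapsto w-\eta\nabla f_i(w)$ on $f_i(w)=\frac{1}{2N}\|y_i-X_iw\|^2$ initialized at $w_0^k$, with a constant step size $\eta$ small enough for convergence, until convergence, and sets $w_i^{k+1}$ to be the limit of these iterates; then $w_0^{k+1}=\frac1M\sum_{i=1}^M w_i^{k+1}$. Let $P_i=X_i^T(X_iX_i^T)^{-1}X_i$, $X_i^{\dagger}=X_i^T(X_iX_i^T)^{-1}$, $\bar P=\frac1M\sum_{i=1}^M P_i$, $\bar Q=\frac1M\sum_{i=1}^M P_iw_i^*$, $\bar Z=\frac1M\sum_{i=1}^M X_i^{\dagger}z_i$. Then for every $K\ge 0$, $$w_0^K=(I-\bar P)^K w_0^0+\sum_{k=0}^{K-1}(I-\bar P)^k(\bar Q+\bar Z).$$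
   Context: This is the distributed setting with $M$ compute nodes, node $i$ holding the data matrix $X_i$ (rows are samples) and label vector $y_i$; "local models are exactly solved" means each local gradient descent is run to convergence in every communication round. $I$ denotes the $d\times d$ identity. *)

theory Defs
  imports "HOL-Analysis.Analysis"
begin

definition loss :: "real^'d^'n \<Rightarrow> real^'n \<Rightarrow> real^'d \<Rightarrow> real" where
  "loss X y w = (1 / (2 * real CARD('n))) * (norm (y - X *v w))^2"

definition grad :: "(real^'d \<Rightarrow> real) \<Rightarrow> real^'d \<Rightarrow> real^'d" where
  "grad f w = (THE D. GDERIV f w :> D)"

definition gd_step :: "real \<Rightarrow> (real^'d \<Rightarrow> real) \<Rightarrow> real^'d \<Rightarrow> real^'d" where
  "gd_step eta f w = w - eta *\<^sub>R grad f w"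

definition gd_limit :: "real \<Rightarrow> (real^'d \<Rightarrow> real) \<Rightarrow> real^'d \<Rightarrow> real^'d" where
  "gd_limit eta f w = lim (\<lambda>t. (gd_step eta f ^^ t) w)"

primrec local_gd :: "nat \<Rightarrow> real \<Rightarrow> (nat \<Rightarrow> real^'d^'n) \<Rightarrow> (nat \<Rightarrow> real^'n)
                      \<Rightarrow> real^'d \<Rightarrow> nat \<Rightarrow> real^'d" where
  "local_gd M eta X y w00 0 = w00"
| "local_gd M eta X y w00 (Suc k) =
     (1 / real M) *\<^sub>R (\<Sum>i<M. gd_limit eta (loss (X i) (y i)) (local_gd M eta X y w00 k))"

primrec matpow :: "real^'d^'d \<Rightarrow> nat \<Rightarrow> real^'d^'d" where
  "matpow A 0 = mat 1"
| "matpow A (Suc k) = A ** matpow A k"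

end

theory Submission
  imports Defs
begin

text \<open>Gradient descent on the least-squares loss of a full-row-rank matrix \<open>X\<close> only moves
  along the row space of \<open>X\<close>, and its limit is a stationary point, i.e. an interpolating solution
  \<open>X w = y\<close>. Hence each exactly solved local model is the orthogonal projection of the starting
  point onto the affine space \<open>{w. X w = y}\<close>, namely \<open>w + X\<^sup>\<dagger>(y - X w)\<close>. Averaging these
  projections makes the server iterate an affine recursion \<open>w \<mapsto> (I - P) w + (Q + Z)\<close>, which
  unrolls to the claimed closed form.\<close>

lemma grad_eqI: "GDERIV f w :> D \<Longrightarrow> grad f w = D"
proof (unfold grad_def, rule the_equality)
  fix D' assume D: "GDERIV f w :> D" and D': "GDERIV f w :> D'"
  have "(\<lambda>h. h \<bullet> D') = (\<lambda>h. h \<bullet> D)"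
    using D D' unfolding gderiv_def by (rule has_derivative_unique[rotated])
  then have "(D' - D) \<bullet> D' = (D' - D) \<bullet> D"
    by (rule fun_cong)
  then have "(D' - D) \<bullet> (D' - D) = 0"
    by (simp add: inner_diff_right)
  then show "D' = D" by simp
qed

lemma GDERIV_loss:
  fixes X :: "real^'d^'n" and y :: "real^'n"
  shows "GDERIV (loss X y) w :> (1 / real CARD('n)) *\<^sub>R (transpose X *v (X *v w - y))"
proof -
  have loss_eq: "loss X y = (\<lambda>w. (1 / (2 * real CARD('n))) * ((X *v w - y) \<bullet> (X *v w - y)))"
    by (simp add: fun_eq_iff loss_def power2_norm_eq_inner inner_diff_left inner_diff_right inner_commute)
  have adjoint: "(X *v h) \<bullet> v = h \<bullet> (v v* X)" "v \<bullet> (X *v h) = h \<bullet> (v v* X)" for h v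
    by (metis dot_lmul_matrix inner_commute)+
  have "((*v) X has_derivative (*v) X) (at w)"
    by (simp add: bounded_linear_imp_has_derivative)
  then show ?thesis
    unfolding gderiv_def loss_eq
    by (auto intro!: derivative_eq_intros elim!: has_derivative_eq_rhs simp: fun_eq_iff adjoint)
qed

lemma gd_step_loss:
  fixes X :: "real^'d^'n"
  shows "gd_step eta (loss X y) w = w - (eta / real CARD('n)) *\<^sub>R (transpose X *v (X *v w - y))"
  unfolding gd_step_def grad_eqI[OF GDERIV_loss] by simp

lemma funpow_diff_in_subspace:
  assumes "subspace S" and "\<And>v. g v - v \<in> S"
  shows "(g ^^ t) w - w \<in> S"
proof (induction t)
  case 0
  show ?case using subspace_0[OF assms(1)] by simp
next
  case (Suc t)
  have "(g ((g ^^ t) w) - (g ^^ t) w) + ((g ^^ t) w - w) \<in> S"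
    by (rule subspace_add[OF assms(1) assms(2) Suc])
  then show ?case by simp
qed

lemma funpow_limit_fixpoint:
  assumes "(\<lambda>t. (g ^^ t) w) \<longlonglongrightarrow> L" and "isCont g L"
  shows "g L = L"
proof (rule LIMSEQ_unique)
  show "(\<lambda>t. g ((g ^^ t) w)) \<longlonglongrightarrow> g L"
    using assms by (rule isCont_tendsto_compose[rotated])
  show "(\<lambda>t. g ((g ^^ t) w)) \<longlonglongrightarrow> L"
    using LIMSEQ_Suc[OF assms(1)] by simp
qed

lemma invertible_gram:
  fixes X :: "real^'d^'n"
  assumes "inj ((*v) (transpose X))"
  shows "invertible (X ** transpose X)"
proof -
  have "v = 0" if "(X ** transpose X) *v v = 0" for v
  proof -
    have "(transpose X *v v) \<bullet> (transpose X *v v) = v \<bullet> ((X ** transpose X) *v v)"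
      by (simp add: dot_lmul_matrix flip: matrix_vector_mul_assoc)
    then have "transpose X *v v = transpose X *v 0"
      using that by simp
    then show "v = 0" by (rule injD[OF assms])
  qed
  then have "\<exists>B. B ** (X ** transpose X) = mat 1"
    using matrix_left_invertible_ker by blast
  then show ?thesis
    by (simp add: invertible_left_inverse)
qed

lemma matrix_inv_inverse:
  assumes "invertible A"
  shows "A ** matrix_inv A = mat 1" and "matrix_inv A ** A = mat 1"
  using someI_ex[OF assms[unfolded invertible_def]] unfolding matrix_inv_def by simp_all

lemma gd_limit_loss:
  fixes X :: "real^'d^'n"
  assumes inj: "inj ((*v) (transpose X))" and "eta > 0"
    and conv: "convergent (\<lambda>t. (gd_step eta (loss X y) ^^ t) w)"
  shows "gd_limit eta (loss X y) w = w + transpose X *v (matrix_inv (X ** transpose X) *v (y - X *v w))"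
proof -
  define g where "g = gd_step eta (loss X y)"
  define G where "G = X ** transpose X"
  define R where "R = range ((*v) (transpose X))"
  define L where "L = gd_limit eta (loss X y) w"
  have g: "g = (\<lambda>v. v - (eta / real CARD('n)) *\<^sub>R (transpose X *v (X *v v - y)))"
    by (simp add: fun_eq_iff g_def gd_step_loss del: transpose_matrix_vector)
  have lim: "(\<lambda>t. (g ^^ t) w) \<longlonglongrightarrow> L"
    using conv by (simp add: L_def gd_limit_def g_def convergent_LIMSEQ_iff)
  have R: "subspace R"
    unfolding R_def by (intro linear_subspace_image matrix_vector_mul_linear subspace_UNIV)
  have iterates_in_R: "(g ^^ t) w - w \<in> R" for t
  proof (rule funpow_diff_in_subspace[OF R])
    fix v
    have "transpose X *v (X *v v - y) \<in> R"
      unfolding R_def by (rule rangeI)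
    then have "- ((eta / real CARD('n)) *\<^sub>R (transpose X *v (X *v v - y))) \<in> R"
      by (intro subspace_neg subspace_scale R)
    then show "g v - v \<in> R"
      by (simp add: g del: transpose_matrix_vector)
  qed
  have "(\<lambda>t. (g ^^ t) w - w) \<longlonglongrightarrow> L - w"
    by (intro tendsto_diff lim tendsto_const)
  then have "L - w \<in> R"
    by (rule closed_sequentially[OF closed_subspace[OF R] iterates_in_R])
  then obtain a where a: "L = w + transpose X *v a"
    unfolding R_def by (metis add.commute diff_add_cancel rangeE)
  have "isCont g L"
    unfolding g
    by (intro continuous_intros bounded_linear.continuous[OF matrix_vector_mul_bounded_linear])
  then have "g L = L"
    by (rule funpow_limit_fixpoint[OF lim])
  then have "transpose X *v (X *v L - y) = transpose X *v 0"
    using \<open>eta > 0\<close> by (simp add: g del: transpose_matrix_vector)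
  then have "X *v L - y = 0"
    by (rule injD[OF inj])
  then have "G *v a = y - X *v w"
    by (simp add: a G_def matrix_vector_right_distrib matrix_vector_mul_assoc eq_diff_eq add.commute
        del: transpose_matrix_vector)
  then have "a = matrix_inv G *v (y - X *v w)"
    using matrix_inv_inverse[OF invertible_gram[OF inj]]
    by (metis G_def matrix_vector_mul_assoc matrix_vector_mul_lid)
  then show ?thesis
    using a by (simp add: L_def G_def)
qed

lemma gd_limit_loss_projection:
  fixes X :: "real^'d^'n"
  assumes "rank X = CARD('n)" and "y = X *v ws + z" and "eta > 0"
    and "convergent (\<lambda>t. (gd_step eta (loss X y) ^^ t) w)"
  defines "P \<equiv> transpose X ** matrix_inv (X ** transpose X) ** X"
    and "D \<equiv> transpose X ** matrix_inv (X ** transpose X)"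
  shows "gd_limit eta (loss X y) w = w - P *v w + P *v ws + D *v z"
proof -
  have inj: "inj ((*v) (transpose X))"
    using assms(1) full_rank_injective[of "transpose X"] by (simp add: rank_transpose)
  show ?thesis
    unfolding gd_limit_loss[OF inj assms(3,4)] unfolding P_def D_def assms(2)
    by (simp add: matrix_vector_mul_assoc matrix_mul_assoc algebra_simps del: transpose_matrix_vector)
qed

lemma sum_matrix_vector_mult: "sum F S *v v = (\<Sum>i\<in>S. F i *v v)"
  by (induction S rule: infinite_finite_induct) (simp_all add: matrix_vector_mult_add_rdistrib)

lemma matpow_affine_recurrence:
  assumes "\<And>k. u (Suc k) = A *v u k + b"
  shows "u K = matpow A K *v u 0 + (\<Sum>k<K. matpow A k *v b)"
proof (induction K)
  case 0
  show ?case by simp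
next
  case (Suc K)
  have "u (Suc K) = A *v (matpow A K *v u 0 + (\<Sum>k<K. matpow A k *v b)) + b"
    by (simp add: assms Suc)
  also have "\<dots> = matpow A (Suc K) *v u 0 + (\<Sum>k<Suc K. matpow A k *v b)"
    by (simp add: matrix_vector_right_distrib vec.sum matrix_vector_mul_assoc sum.lessThan_Suc_shift
        del: sum.lessThan_Suc)
  finally show ?case .
qed

theorem lemma1:
  fixes M :: nat and eta :: real
    and X :: "nat \<Rightarrow> real^'d^'n" and wstar :: "nat \<Rightarrow> real^'d"
    and z :: "nat \<Rightarrow> real^'n" and y :: "nat \<Rightarrow> real^'n"
    and w00 :: "real^'d" and K :: nat
  assumes "M \<ge> 1"
    and "CARD('d) > CARD('n)"
    and "\<And>i. i < M \<Longrightarrow> rank (X i) = CARD('n)"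
    and "\<And>i. i < M \<Longrightarrow> y i = X i *v wstar i + z i"
    and "eta > 0"
    and "\<And>i w. i < M \<Longrightarrow> convergent (\<lambda>t. (gd_step eta (loss (X i) (y i)) ^^ t) w)"
  shows "local_gd M eta X y w00 K =
     matpow (mat 1 - (1 / real M) *\<^sub>R (\<Sum>i<M. transpose (X i) ** matrix_inv (X i ** transpose (X i)) ** X i)) K *v w00
     + (\<Sum>k<K. matpow (mat 1 - (1 / real M) *\<^sub>R (\<Sum>i<M. transpose (X i) ** matrix_inv (X i ** transpose (X i)) ** X i)) k
          *v ((1 / real M) *\<^sub>R (\<Sum>i<M. (transpose (X i) ** matrix_inv (X i ** transpose (X i)) ** X i) *v wstar i)
              + (1 / real M) *\<^sub>R (\<Sum>i<M. (transpose (X i) ** matrix_inv (X i ** transpose (X i))) *v z i)))"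
proof -
  define P where "P i = transpose (X i) ** matrix_inv (X i ** transpose (X i)) ** X i" for i
  define D where "D i = transpose (X i) ** matrix_inv (X i ** transpose (X i))" for i
  define A where "A = mat 1 - (1 / real M) *\<^sub>R (\<Sum>i<M. P i)"
  define b where "b = (1 / real M) *\<^sub>R (\<Sum>i<M. P i *v wstar i) + (1 / real M) *\<^sub>R (\<Sum>i<M. D i *v z i)"
  have server_round: "local_gd M eta X y w00 (Suc k) = A *v local_gd M eta X y w00 k + b" for k
  proof -
    let ?w = "local_gd M eta X y w00 k"
    have "local_gd M eta X y w00 (Suc k)
        = (1 / real M) *\<^sub>R (\<Sum>i<M. ?w - P i *v ?w + P i *v wstar i + D i *v z i)"
      using gd_limit_loss_projection[OF assms(3,4,5,6)] by (simp add: P_def D_def)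
    also have "\<dots> = A *v ?w + b"
      using assms(1)
      by (simp add: A_def b_def sum.distrib sum_subtractf sum_constant_scaleR algebra_simps
          sum_matrix_vector_mult scaleR_matrix_vector_assoc[symmetric] del: sum_constant)
    finally show ?thesis .
  qed
  show ?thesis
    using matpow_affine_recurrence[where u = "local_gd M eta X y w00", OF server_round]
    unfolding A_def b_def P_def D_def by simp
qed

end
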